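(* Let $h$ be a reduced function, $n\ge4$, and let $E^{(n)}$ and $\mathcal E^{(n)}$ be defined on pure states by $$E^{(n)}(|\psi\rangle)=\frac12\sum_{i=1}^n h(\rho^{A_i}),\qquad \mathcal E^{(n)}(|\psi\rangle)=\frac12\sum_{S\in\mathcal T_n}h(\rho^S),$$ where $\mathcal T_n$ is the set of nonempty subsets $S\subseteq\{A_1,\dots,A_n\}$ with $|S|<n/2$ together with (for even $n$) those with $|S|=n/2$ and $A_n\notin S$. Then for every pure state $|\psi\rangle\in\mathcal H^{A_1\cdots A_n}$, $E^{(n)}(|\psi\rangle)\le\mathcal E^{(n)}(|\psi\rangle)$, with strict inequality if and only if $|\psi\rangle$ is not fully separable, i.e. not of the form $|\psi_1\rangle^{A_1}\otimes\cdots\otimes|\psi_n\rangle^{A_n}$.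
   Context: All Hilbert spaces are finite-dimensional; $\rho^X$ denotes the reduced state of $|\psi\rangle$ on the set $X$ of parties. Reduced function: a function $h$ from density matrices (of any finite dimension) to $[0,\infty)$ that is concave, depends only on the multiset of nonzero eigenvalues of its argument, and satisfies $h(\rho)=0$ iff $\rho$ is pure. *)

theory Defs
  imports "Jordan_Normal_Form.Char_Poly" "HOL-Computational_Algebra.Polynomial"
begin

definition is_density :: "nat \<Rightarrow> complex mat \<Rightarrow> bool" where
  "is_density m A \<longleftrightarrow> A \<in> carrier_mat m m
     \<and> (\<forall>i<m. \<forall>j<m. A $$ (i,j) = cnj (A $$ (j,i)))
     \<and> (\<forall>v. dim_vec v = m \<longrightarrow>
           0 \<le> Re (\<Sum>i<m. \<Sum>j<m. cnj (v $ i) * A $$ (i,j) * v $ j))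
     \<and> (\<Sum>i<m. A $$ (i,i)) = 1"

definition is_pure_density :: "nat \<Rightarrow> complex mat \<Rightarrow> bool" where
  "is_pure_density m A \<longleftrightarrow> is_density m A
     \<and> (\<exists>v. dim_vec v = m \<and> A = mat m m (\<lambda>(i,j). v $ i * cnj (v $ j)))"

definition same_nonzero_spectrum :: "complex mat \<Rightarrow> complex mat \<Rightarrow> bool" where
  "same_nonzero_spectrum A B \<longleftrightarrow>
     (\<forall>a. a \<noteq> 0 \<longrightarrow> order a (char_poly A) = order a (char_poly B))"

definition reduced_function :: "(complex mat \<Rightarrow> real) \<Rightarrow> bool" where
  "reduced_function h \<longleftrightarrow>
     (\<forall>m A. is_density m A \<longrightarrow> 0 \<le> h A)
   \<and> (\<forall>m A B t. is_density m A \<longrightarrow> is_density m B \<longrightarrow> 0 \<le> t \<longrightarrow> t \<le> 1 \<longrightarrow>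
         t * h A + (1 - t) * h B \<le> h (complex_of_real t \<cdot>\<^sub>m A + complex_of_real (1 - t) \<cdot>\<^sub>m B))
   \<and> (\<forall>m k A B. is_density m A \<longrightarrow> is_density k B \<longrightarrow> same_nonzero_spectrum A B \<longrightarrow> h A = h B)
   \<and> (\<forall>m A. is_density m A \<longrightarrow> (h A = 0 \<longleftrightarrow> is_pure_density m A))"

text \<open>Mixed-radix encoding of a local-index assignment x (x i < d i for i in S)
  into a basis index of the tensor product over the parties in S.\<close>
definition radix :: "(nat \<Rightarrow> nat) \<Rightarrow> nat set \<Rightarrow> nat \<Rightarrow> nat" where
  "radix d S i = (\<Prod>j\<in>{j\<in>S. j < i}. d j)"

definition dimS :: "(nat \<Rightarrow> nat) \<Rightarrow> nat set \<Rightarrow> nat" where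
  "dimS d S = (\<Prod>j\<in>S. d j)"

definition encode :: "(nat \<Rightarrow> nat) \<Rightarrow> nat set \<Rightarrow> (nat \<Rightarrow> nat) \<Rightarrow> nat" where
  "encode d S x = (\<Sum>i\<in>S. x i * radix d S i)"

definition decode :: "(nat \<Rightarrow> nat) \<Rightarrow> nat set \<Rightarrow> nat \<Rightarrow> nat \<Rightarrow> nat" where
  "decode d S k i = (k div radix d S i) mod d i"

definition is_pure_state :: "nat \<Rightarrow> (nat \<Rightarrow> nat) \<Rightarrow> complex vec \<Rightarrow> bool" where
  "is_pure_state n d \<psi> \<longleftrightarrow> dim_vec \<psi> = dimS d {0..<n}
     \<and> (\<Sum>k<dim_vec \<psi>. (cmod (\<psi> $ k))\<^sup>2) = 1"

text \<open>Reduced state rho^S = Tr_{complement of S} |psi><psi|, as a dimS d S square matrix.\<close>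
definition reduced_state :: "nat \<Rightarrow> (nat \<Rightarrow> nat) \<Rightarrow> complex vec \<Rightarrow> nat set \<Rightarrow> complex mat" where
  "reduced_state n d \<psi> S =
     (let C = {0..<n} - S;
          idx = (\<lambda>k c. encode d {0..<n}
                   (\<lambda>i. if i \<in> S then decode d S k i else decode d C c i))
      in mat (dimS d S) (dimS d S)
           (\<lambda>(k,l). \<Sum>c<dimS d C. \<psi> $ (idx k c) * cnj (\<psi> $ (idx l c))))"

definition fully_separable :: "nat \<Rightarrow> (nat \<Rightarrow> nat) \<Rightarrow> complex vec \<Rightarrow> bool" where
  "fully_separable n d \<psi> \<longleftrightarrow>
     (\<exists>\<phi> :: nat \<Rightarrow> complex vec. (\<forall>i<n. dim_vec (\<phi> i) = d i) \<and>
        (\<forall>k<dimS d {0..<n}. \<psi> $ k = (\<Prod>i<n. \<phi> i $ decode d {0..<n} k i)))"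

text \<open>The family T_n (parties A_1..A_n are 0..n-1, so A_n is n-1).\<close>
definition T_family :: "nat \<Rightarrow> nat set set" where
  "T_family n = {S. S \<subseteq> {0..<n} \<and> S \<noteq> {} \<and>
                   (2 * card S < n \<or> (2 * card S = n \<and> n - 1 \<notin> S))}"

definition E_single :: "(complex mat \<Rightarrow> real) \<Rightarrow> nat \<Rightarrow> (nat \<Rightarrow> nat) \<Rightarrow> complex vec \<Rightarrow> real" where
  "E_single h n d \<psi> = (1/2) * (\<Sum>i<n. h (reduced_state n d \<psi> {i}))"

definition E_family :: "(complex mat \<Rightarrow> real) \<Rightarrow> nat \<Rightarrow> (nat \<Rightarrow> nat) \<Rightarrow> complex vec \<Rightarrow> real" where
  "E_family h n d \<psi> = (1/2) * (\<Sum>S\<in>T_family n. h (reduced_state n d \<psi> S))"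

end

theory Submission
  imports Defs
begin

text \<open>The difference of the two sides is half the sum of h over the sets of the family with at least
  two parties, so it is nonnegative and vanishes iff all those reduced states are pure. The reduced
  state on S is the Gram matrix of the coefficient matrix of \<open>\<psi>\<close> across the cut S versus its
  complement, so it is pure iff that matrix has rank one, i.e. iff all its 2\<times>2 minors vanish.
  Taking the minors through a fixed assignment x0 with \<open>\<psi>(x0) \<noteq> 0\<close>, this splitting property is
  stable under complements and intersections of cuts; for n \<ge> 4 every single party is obtained
  from the pairs of the family in this way, and splitting across every single party writes \<open>\<psi>\<close> as
  a product of one-party vectors. Conversely, all reduced states of a product state are pure.\<close>

section \<open>Mixed-radix indices\<close>

lemma encode_cong: "(\<And>i. i \<in> S \<Longrightarrow> x i = y i) \<Longrightarrow> encode d S x = encode d S y"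
  unfolding encode_def by (rule sum.cong) auto

lemma radix_pos: "finite S \<Longrightarrow> \<forall>j\<in>S. 0 < d j \<Longrightarrow> 0 < radix d S i"
  unfolding radix_def by (auto intro: prod_pos)

lemma dimS_pos: "finite S \<Longrightarrow> \<forall>j\<in>S. 0 < d j \<Longrightarrow> 0 < dimS d S"
  unfolding dimS_def by (auto intro: prod_pos)

lemma decode_less: "0 < d i \<Longrightarrow> decode d S k i < d i"
  by (simp add: decode_def)

lemma radix_mult_dvd_dimS:
  assumes "finite S" "i \<in> S"
  shows "radix d S i * d i dvd dimS d S"
proof -
  have "radix d S i * d i = prod d (insert i {j\<in>S. j < i})"
    unfolding radix_def using assms by (subst prod.insert) auto
  also have "\<dots> dvd dimS d S" unfolding dimS_def
    by (rule prod_dvd_prod_subset) (use assms in auto)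
  finally show ?thesis .
qed

lemma decode_add_mult_dimS:
  assumes "finite S" "i \<in> S" "0 < radix d S i"
  shows "decode d S (a + m * dimS d S) i = decode d S a i"
proof -
  obtain t where t: "dimS d S = radix d S i * d i * t"
    using radix_mult_dvd_dimS[OF assms(1,2)] by (metis dvdE)
  have "(a + m * dimS d S) div radix d S i = (a + (m * t * d i) * radix d S i) div radix d S i"
    unfolding t by (simp add: ac_simps)
  also have "\<dots> = a div radix d S i + (m * t) * d i"
    using assms(3) by simp
  finally show ?thesis unfolding decode_def by simp
qed

context
  fixes S :: "nat set" and b :: nat
  assumes finite: "finite S" and greater: "\<forall>a\<in>S. a < b"
begin

lemma radix_insert_greatest: "i \<in> S \<Longrightarrow> radix d (insert b S) i = radix d S i"
  unfolding radix_def using greater by (intro arg_cong[where f="prod d"]) auto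

lemma radix_insert_greatest_self: "radix d (insert b S) b = dimS d S"
  unfolding radix_def dimS_def using greater by (intro arg_cong[where f="prod d"]) auto

lemma dimS_insert_greatest: "dimS d (insert b S) = d b * dimS d S"
  unfolding dimS_def using finite greater by auto

lemma encode_insert_greatest: "encode d (insert b S) x = encode d S x + x b * dimS d S"
proof -
  have "b \<notin> S" using greater by auto
  then have "encode d (insert b S) x = x b * radix d (insert b S) b + (\<Sum>i\<in>S. x i * radix d (insert b S) i)"
    unfolding encode_def using finite by simp
  then show ?thesis
    by (simp add: radix_insert_greatest radix_insert_greatest_self encode_def)
qed

end

lemma encode_less_dimS:
  assumes "finite S" "\<forall>i\<in>S. x i < d i"
  shows "encode d S x < dimS d S"
  using assms
proof (induction S rule: finite_linorder_max_induct)
  case empty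
  then show ?case by (simp add: encode_def dimS_def)
next
  case (insert b S)
  then have "encode d (insert b S) x < (x b + 1) * dimS d S"
    by (simp add: encode_insert_greatest)
  also have "\<dots> \<le> d b * dimS d S"
    using insert.prems by (intro mult_right_mono) auto
  finally show ?case by (simp add: dimS_insert_greatest insert.hyps)
qed

lemma decode_encode:
  assumes "finite S" "\<forall>j\<in>S. x j < d j" "i \<in> S"
  shows "decode d S (encode d S x) i = x i"
  using assms
proof (induction S rule: finite_linorder_max_induct)
  case empty
  then show ?case by simp
next
  case (insert b S)
  have pos: "\<forall>j\<in>S. 0 < d j" using insert.prems(1) by fastforce
  have less: "encode d S x < dimS d S" using encode_less_dimS insert by simp
  show ?case
  proof (cases "i = b")
    case True
    then have "decode d (insert b S) (encode d (insert b S) x) i = x b mod d b"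
      using less dimS_pos[OF insert.hyps(1) pos]
      by (simp add: decode_def radix_insert_greatest_self encode_insert_greatest insert.hyps)
    then show ?thesis using True insert.prems by simp
  next
    case False
    then have "i \<in> S" using insert.prems by simp
    then show ?thesis
      using insert decode_add_mult_dimS[OF insert.hyps(1) \<open>i \<in> S\<close> radix_pos[OF insert.hyps(1) pos]]
      by (simp add: decode_def radix_insert_greatest encode_insert_greatest)
  qed
qed

lemma encode_decode:
  assumes "finite S" "\<forall>j\<in>S. 0 < d j" "k < dimS d S"
  shows "encode d S (decode d S k) = k"
  using assms
proof (induction S arbitrary: k rule: finite_linorder_max_induct)
  case empty
  then show ?case by (simp add: encode_def dimS_def)
next
  case (insert b S)
  let ?D = "dimS d S"
  have pos: "\<forall>j\<in>S. 0 < d j" using insert.prems by simp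
  have D: "0 < ?D" using dimS_pos[OF insert.hyps(1) pos] .
  have k: "k = k mod ?D + (k div ?D) * ?D" by (simp add: mod_div_mult_eq)
  have high: "decode d (insert b S) k b = k div ?D"
    using insert.prems D
    by (simp add: decode_def radix_insert_greatest_self dimS_insert_greatest insert.hyps
        less_mult_imp_div_less mult.commute)
  have "encode d S (decode d (insert b S) k) = encode d S (decode d S (k mod ?D))"
  proof (rule encode_cong)
    fix i assume "i \<in> S"
    then show "decode d (insert b S) k i = decode d S (k mod ?D) i"
      using decode_add_mult_dimS[OF insert.hyps(1) \<open>i \<in> S\<close> radix_pos[OF insert.hyps(1) pos]]
      by (subst k) (simp add: decode_def radix_insert_greatest insert.hyps)
  qed
  also have "\<dots> = k mod ?D" using insert.IH pos D by simp
  finally show ?case using k by (simp add: encode_insert_greatest insert.hyps high)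
qed


section \<open>Gram matrices\<close>

definition gram :: "nat \<Rightarrow> nat \<Rightarrow> (nat \<Rightarrow> nat \<Rightarrow> complex) \<Rightarrow> complex mat" where
  "gram m p M = mat m m (\<lambda>(k,l). \<Sum>c<p. M k c * cnj (M l c))"

lemma gram_quadratic_form:
  "(\<Sum>i<m. \<Sum>j<m. cnj (v $ i) * gram m p M $$ (i,j) * v $ j) =
   (\<Sum>c<p. (\<Sum>i<m. cnj (v $ i) * M i c) * cnj (\<Sum>j<m. cnj (v $ j) * M j c))"
proof -
  have "(\<Sum>i<m. \<Sum>j<m. cnj (v $ i) * gram m p M $$ (i,j) * v $ j) =
        (\<Sum>i<m. \<Sum>j<m. \<Sum>c<p. cnj (v $ i) * M i c * (v $ j * cnj (M j c)))"
    by (intro sum.cong refl) (simp add: gram_def sum_distrib_left sum_distrib_right mult_ac)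
  also have "\<dots> = (\<Sum>c<p. \<Sum>i<m. \<Sum>j<m. cnj (v $ i) * M i c * (v $ j * cnj (M j c)))"
    by (subst sum.swap) (simp add: sum.swap[of _ "{..<m}" "{..<p}"])
  also have "\<dots> = (\<Sum>c<p. (\<Sum>i<m. cnj (v $ i) * M i c) * cnj (\<Sum>j<m. cnj (v $ j) * M j c))"
    by (simp add: sum_product)
  finally show ?thesis .
qed

lemma gram_is_density:
  assumes "(\<Sum>k<m. \<Sum>c<p. M k c * cnj (M k c)) = 1"
  shows "is_density m (gram m p M)"
  unfolding is_density_def
proof (intro conjI allI impI)
  show "gram m p M \<in> carrier_mat m m" by (simp add: gram_def)
  fix i j assume "i < m" "j < m"
  then show "gram m p M $$ (i, j) = cnj (gram m p M $$ (j, i))"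
    by (simp add: gram_def mult.commute)
next
  fix v :: "complex vec"
  have "Re (\<Sum>i<m. \<Sum>j<m. cnj (v $ i) * gram m p M $$ (i, j) * v $ j) =
        (\<Sum>c<p. (cmod (\<Sum>i<m. cnj (v $ i) * M i c))\<^sup>2)"
    unfolding gram_quadratic_form Re_sum
    by (intro sum.cong refl) (simp only: complex_norm_square[symmetric] Re_complex_of_real)
  also have "\<dots> \<ge> 0" by (intro sum_nonneg) simp
  finally show "0 \<le> Re (\<Sum>i<m. \<Sum>j<m. cnj (v $ i) * gram m p M $$ (i, j) * v $ j)" .
next
  show "(\<Sum>i<m. gram m p M $$ (i, i)) = 1" using assms by (simp add: gram_def)
qed

lemma lagrange_identity:
  fixes A B :: "nat \<Rightarrow> complex"
  shows "(\<Sum>c\<in>I. \<Sum>c'\<in>I. (A c * B c' - A c' * B c) * cnj (A c * B c' - A c' * B c)) =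
     2 * ((\<Sum>c\<in>I. A c * cnj (A c)) * (\<Sum>c\<in>I. B c * cnj (B c))
        - (\<Sum>c\<in>I. A c * cnj (B c)) * (\<Sum>c\<in>I. B c * cnj (A c)))"
proof -
  have expand: "(A c * B c' - A c' * B c) * cnj (A c * B c' - A c' * B c) =
      A c * cnj (A c) * (B c' * cnj (B c')) + A c' * cnj (A c') * (B c * cnj (B c))
      - A c * cnj (B c) * (B c' * cnj (A c')) - A c' * cnj (B c') * (B c * cnj (A c))" for c c'
    by (simp add: algebra_simps)
  have swap: "(\<Sum>c\<in>I. \<Sum>c'\<in>I. f c' * g c) = (\<Sum>c\<in>I. f c) * (\<Sum>c\<in>I. g c)"
    for f g :: "nat \<Rightarrow> complex"
    by (subst sum.swap) (simp add: sum_product)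
  show ?thesis
    unfolding expand sum_subtractf sum.distrib swap by (simp add: sum_product algebra_simps)
qed

text \<open>A rank-one Gram matrix forces all 2\<times>2 minors of M to vanish: by the Lagrange identity
  their squared moduli sum to twice a 2\<times>2 minor of the Gram matrix.\<close>
lemma gram_rank_one_minors:
  assumes G: "gram m p M = mat m m (\<lambda>(i,j). v $ i * cnj (v $ j))"
    and "k < m" "l < m" "c < p" "c' < p"
  shows "M k c * M l c' = M k c' * M l c"
proof -
  have g: "(\<Sum>c<p. M i c * cnj (M j c)) = v $ i * cnj (v $ j)" if "i < m" "j < m" for i j
    using arg_cong[OF G, of "\<lambda>X. X $$ (i,j)"] that by (simp add: gram_def)
  define z where "z c c' = M k c * M l c' - M k c' * M l c" for c c'
  have "complex_of_real (\<Sum>c<p. \<Sum>c'<p. (cmod (z c c'))\<^sup>2) = (\<Sum>c<p. \<Sum>c'<p. z c c' * cnj (z c c'))"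
    by (simp only: of_real_sum complex_norm_square)
  also have "\<dots> = 2 * ((v$k * cnj (v$k)) * (v$l * cnj (v$l)) - (v$k * cnj (v$l)) * (v$l * cnj (v$k)))"
    unfolding z_def lagrange_identity using g assms(2,3) by simp
  also have "\<dots> = 0" by (simp add: algebra_simps)
  finally have "(\<Sum>c<p. \<Sum>c'<p. (cmod (z c c'))\<^sup>2) = 0" by (simp only: of_real_eq_0_iff)
  then have "(cmod (z c c'))\<^sup>2 = 0"
    using assms(4,5) by (simp add: sum_nonneg sum_nonneg_eq_0_iff)
  then show ?thesis unfolding z_def by simp
qed

lemma gram_pure_if_product:
  assumes product: "\<And>k c. k < m \<Longrightarrow> c < p \<Longrightarrow> M k c = a k * b c"
    and "is_density m (gram m p M)"
  shows "is_pure_density m (gram m p M)"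
  unfolding is_pure_density_def
proof (intro conjI exI)
  define N where "N = (\<Sum>c<p. (cmod (b c))\<^sup>2)"
  define v where "v = vec m (\<lambda>k. complex_of_real (sqrt N) * a k)"
  have N: "complex_of_real (sqrt N) * cnj (complex_of_real (sqrt N)) = complex_of_real N"
    unfolding N_def by (simp flip: of_real_mult add: sum_nonneg)
  show "is_density m (gram m p M)" by fact
  show "dim_vec v = m" unfolding v_def by simp
  show "gram m p M = mat m m (\<lambda>(i, j). v $ i * cnj (v $ j))"
  proof (rule eq_matI)
    fix i j assume "i < dim_row (mat m m (\<lambda>(i, j). v $ i * cnj (v $ j)))"
      and "j < dim_col (mat m m (\<lambda>(i, j). v $ i * cnj (v $ j)))"
    then have ij: "i < m" "j < m" by auto
    have "(\<Sum>c<p. M i c * cnj (M j c)) = (\<Sum>c<p. a i * cnj (a j) * (b c * cnj (b c)))"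
      by (intro sum.cong refl) (simp add: product ij mult_ac)
    also have "\<dots> = a i * cnj (a j) * complex_of_real N"
      unfolding N_def sum_distrib_left[symmetric] of_real_sum complex_norm_square ..
    also have "\<dots> = v $ i * cnj (v $ j)"
      using N ij unfolding v_def by (simp add: mult_ac)
    finally show "gram m p M $$ (i, j) = mat m m (\<lambda>(i, j). v $ i * cnj (v $ j)) $$ (i, j)"
      using ij by (simp add: gram_def)
  qed (simp_all add: gram_def)
qed

section \<open>Splitting of amplitude functions\<close>

definition mix :: "nat set \<Rightarrow> (nat \<Rightarrow> nat) \<Rightarrow> (nat \<Rightarrow> nat) \<Rightarrow> nat \<Rightarrow> nat" where
  "mix S x y = (\<lambda>i. if i \<in> S then x i else y i)"

text \<open>\<open>splits P B S x0\<close> is the vanishing of the 2\<times>2 minors through the base point x0 of the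
  matrix of P with rows indexed by the S-part and columns by the remaining part of an assignment;
  when P x0 \<noteq> 0 it says that P factorises across the cut S.\<close>
definition splits :: "((nat \<Rightarrow> nat) \<Rightarrow> complex) \<Rightarrow> (nat \<Rightarrow> nat) set \<Rightarrow> nat set \<Rightarrow> (nat \<Rightarrow> nat) \<Rightarrow> bool" where
  "splits P B S x0 \<longleftrightarrow> (\<forall>x\<in>B. P x * P x0 = P (mix S x x0) * P (mix S x0 x))"

lemma splits_Compl: "splits P B S x0 \<Longrightarrow> splits P B (- S) x0"
proof -
  have "mix (- S) x y = mix S y x" for x y unfolding mix_def by auto
  then show "splits P B S x0 \<Longrightarrow> splits P B (- S) x0" unfolding splits_def by (simp add: mult.commute)
qed

context
  fixes P :: "(nat \<Rightarrow> nat) \<Rightarrow> complex" and B :: "(nat \<Rightarrow> nat) set" and x0 :: "nat \<Rightarrow> nat" and n :: nat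
  assumes base: "x0 \<in> B" "P x0 \<noteq> 0"
    and mix_closed: "\<And>S x y. x \<in> B \<Longrightarrow> y \<in> B \<Longrightarrow> mix S x y \<in> B"
    and local: "\<And>x y. (\<And>i. i < n \<Longrightarrow> x i = y i) \<Longrightarrow> P x = P y"
begin

lemma splits_cong_below:
  assumes "splits P B S x0" "\<And>i. i < n \<Longrightarrow> i \<in> S \<longleftrightarrow> i \<in> S'"
  shows "splits P B S' x0"
proof -
  have "P (mix S x y) = P (mix S' x y)" for x y
    by (rule local) (use assms(2) in \<open>auto simp: mix_def\<close>)
  then show ?thesis using assms(1) unfolding splits_def by simp
qed

lemma splits_Int:
  assumes "splits P B A x0" "splits P B A' x0"
  shows "splits P B (A \<inter> A') x0"
  unfolding splits_def
proof
  fix x assume x: "x \<in> B"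
  define u where "u = mix A x x0"
  define w where "w = mix A x0 x"
  define y where "y = mix (A \<inter> A') x0 x"
  define I where "I = mix (A \<inter> A') x x0"
  define D where "D = mix (A - A') x x0"
  have uy: "u \<in> B" "y \<in> B" unfolding u_def y_def using mix_closed x base by auto
  have "mix A' u x0 = I" "mix A' x0 u = D" "mix A y x0 = D" "mix A x0 y = w"
    unfolding u_def w_def y_def I_def D_def mix_def by auto
  then have "P x * P x0 = P u * P w" "P u * P x0 = P I * P D" "P y * P x0 = P D * P w"
    using assms x uy unfolding splits_def u_def w_def by metis+
  then have "(P x * P x0) * P x0 = (P I * P y) * P x0"
    by (simp add: mult_ac)
  then show "P x * P x0 = P (mix (A \<inter> A') x x0) * P (mix (A \<inter> A') x0 x)"
    using base unfolding I_def y_def by simp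
qed

text \<open>Every single party is an intersection of pairs in the family (for n = 4 with the party
  n - 1 excluded from all of them, of complements of such pairs).\<close>
lemma splits_singletons_if_pairs:
  assumes n: "4 \<le> n"
    and pairs: "\<And>S. S \<in> T_family n \<Longrightarrow> card S = 2 \<Longrightarrow> splits P B S x0"
    and i: "i < n"
  shows "splits P B {i} x0"
proof -
  have pair: "splits P B {a, b} x0" if "a < b" "b < n" "4 < n \<or> b < 3" for a b
    using that n by (intro pairs) (auto simp: T_family_def)
  have single0: "splits P B {0} x0"
    by (rule splits_cong_below[OF splits_Int[OF pair pair, of 0 1 0 2]]) (use n in auto)
  have single2: "splits P B {2} x0"
    by (rule splits_cong_below[OF splits_Int[OF pair pair, of 0 2 1 2]]) (use n in auto)
  consider "i = 0" | "i = 1" | "i = 2" | "i = 3" "n = 4" | "3 \<le> i" "4 < n" using n i by linarith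
  then show ?thesis
  proof cases
    case 2
    show ?thesis
      by (rule splits_cong_below[OF splits_Int[OF pair pair, of 0 1 1 2]]) (use n 2 in auto)
  next
    case 4
    have "splits P B (- {0, 1} \<inter> - {2}) x0"
      using n by (intro splits_Int splits_Compl single2 pair) auto
    then show ?thesis by (rule splits_cong_below) (use 4 in auto)
  next
    case 5
    have "splits P B ({0, i} \<inter> - {0}) x0"
      using 5 i by (intro splits_Int splits_Compl single0 pair) auto
    then show ?thesis by (rule splits_cong_below) (use 5 in auto)
  qed (use single0 single2 in simp_all)
qed

lemma splits_singletons_product:
  assumes singles: "\<And>i. i < n \<Longrightarrow> splits P B {i} x0" and x: "x \<in> B"
  shows "P x * P x0 ^ n = P x0 * (\<Prod>i<n. P (x0(i := x i)))"
proof -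
  have "P x * P x0 ^ m = P (mix {0..<m} x0 x) * (\<Prod>i<m. P (x0(i := x i)))" if "m \<le> n" for m
    using that
  proof (induction m)
    case 0
    then show ?case by (simp add: mix_def)
  next
    case (Suc m)
    define z where "z = mix {0..<m} x0 x"
    have "mix {m} z x0 = x0(m := x m)" "mix {m} x0 z = mix {0..<Suc m} x0 x"
      unfolding z_def mix_def by auto
    moreover have "z \<in> B" unfolding z_def using mix_closed base x by blast
    ultimately have "P z * P x0 = P (x0(m := x m)) * P (mix {0..<Suc m} x0 x)"
      using singles[of m] Suc.prems unfolding splits_def by fastforce
    moreover have "P x * P x0 ^ m = P z * (\<Prod>i<m. P (x0(i := x i)))"
      using Suc by (simp add: z_def fun_upd_def)
    then have "P x * P x0 ^ Suc m = (P z * P x0) * (\<Prod>i<m. P (x0(i := x i)))"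
      by (metis power_Suc mult.assoc mult.commute)
    ultimately show ?case by (simp only: prod.lessThan_Suc mult_ac)
  qed
  moreover have "P (mix {0..<n} x0 x) = P x0" by (rule local) (simp add: mix_def)
  ultimately show ?thesis by simp
qed

end

section \<open>Reduced states of a pure state\<close>

definition amplitude :: "nat \<Rightarrow> (nat \<Rightarrow> nat) \<Rightarrow> complex vec \<Rightarrow> (nat \<Rightarrow> nat) \<Rightarrow> complex" where
  "amplitude n d \<psi> x = \<psi> $ encode d {0..<n} x"

definition assignments :: "nat \<Rightarrow> (nat \<Rightarrow> nat) \<Rightarrow> (nat \<Rightarrow> nat) set" where
  "assignments n d = {x. \<forall>i<n. x i < d i}"

definition glue :: "nat \<Rightarrow> (nat \<Rightarrow> nat) \<Rightarrow> nat set \<Rightarrow> nat \<Rightarrow> nat \<Rightarrow> nat \<Rightarrow> nat" where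
  "glue n d S k c = (\<lambda>i. if i \<in> S then decode d S k i else decode d ({0..<n} - S) c i)"

definition coeff_matrix :: "nat \<Rightarrow> (nat \<Rightarrow> nat) \<Rightarrow> complex vec \<Rightarrow> nat set \<Rightarrow> nat \<Rightarrow> nat \<Rightarrow> complex" where
  "coeff_matrix n d \<psi> S k c = \<psi> $ encode d {0..<n} (glue n d S k c)"

lemma reduced_state_eq_gram:
  "reduced_state n d \<psi> S = gram (dimS d S) (dimS d ({0..<n} - S)) (coeff_matrix n d \<psi> S)"
  unfolding reduced_state_def gram_def coeff_matrix_def glue_def Let_def ..

lemma amplitude_cong: "(\<And>i. i < n \<Longrightarrow> x i = y i) \<Longrightarrow> amplitude n d \<psi> x = amplitude n d \<psi> y"
  unfolding amplitude_def by (rule arg_cong[where f="\<lambda>k. \<psi> $ k"], rule encode_cong) auto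

lemma mix_in_assignments: "x \<in> assignments n d \<Longrightarrow> y \<in> assignments n d \<Longrightarrow> mix S x y \<in> assignments n d"
  unfolding assignments_def mix_def by auto

lemma decode_in_assignments: "\<forall>i<n. 0 < d i \<Longrightarrow> decode d S k \<in> assignments n d"
  unfolding assignments_def by (auto intro: decode_less)

lemma encode_less_dimS_assignments:
  "x \<in> assignments n d \<Longrightarrow> S \<subseteq> {0..<n} \<Longrightarrow> encode d S x < dimS d S"
  unfolding assignments_def by (intro encode_less_dimS) (auto intro: finite_subset)

context
  fixes n :: nat and d :: "nat \<Rightarrow> nat" and S :: "nat set"
  assumes pos: "\<forall>i<n. 0 < d i" and S: "S \<subseteq> {0..<n}"
begin

lemma glue_in_assignments: "glue n d S k c \<in> assignments n d"
  using pos unfolding assignments_def glue_def by (auto intro: decode_less)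

lemma decode_encode_glue: "i < n \<Longrightarrow> decode d {0..<n} (encode d {0..<n} (glue n d S k c)) i = glue n d S k c i"
  using glue_in_assignments by (intro decode_encode) (auto simp: assignments_def)

lemma glue_encode:
  assumes "x \<in> assignments n d" "y \<in> assignments n d" "i < n"
  shows "glue n d S (encode d S x) (encode d ({0..<n} - S) y) i = mix S x y i"
  using assms S finite_subset[OF S]
  by (auto simp: glue_def mix_def assignments_def intro!: decode_encode)

lemma coeff_matrix_encode:
  assumes "x \<in> assignments n d" "y \<in> assignments n d"
  shows "coeff_matrix n d \<psi> S (encode d S x) (encode d ({0..<n} - S) y) = amplitude n d \<psi> (mix S x y)"
  unfolding coeff_matrix_def amplitude_def
  using glue_encode[OF assms] by (auto intro!: arg_cong[where f="\<lambda>k. \<psi> $ k"] encode_cong)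

lemma glue_bij:
  "bij_betw (\<lambda>(k,c). encode d {0..<n} (glue n d S k c))
     ({..<dimS d S} \<times> {..<dimS d ({0..<n} - S)}) {..<dimS d {0..<n}}"
proof -
  let ?C = "{0..<n} - S" and ?N = "{0..<n}"
  have fin: "finite S" "finite ?C" "finite ?N" using finite_subset[OF S] by auto
  have enc_dec: "encode d T (decode d T k) = k" if "T \<subseteq> ?N" "k < dimS d T" for T k
    using that pos by (intro encode_decode) (auto intro: finite_subset)
  define g where "g j = (encode d S (decode d ?N j), encode d ?C (decode d ?N j))" for j
  show ?thesis
  proof (rule bij_betw_byWitness[where f'=g])
    show "\<forall>a\<in>{..<dimS d S} \<times> {..<dimS d ?C}. g ((\<lambda>(k,c). encode d ?N (glue n d S k c)) a) = a"
    proof (clarify)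
      fix k c assume kc: "k < dimS d S" "c < dimS d ?C"
      have component: "encode d T (decode d ?N (encode d ?N (glue n d S k c))) = k'"
        if "T \<subseteq> ?N" "k' < dimS d T" "\<And>i. i \<in> T \<Longrightarrow> glue n d S k c i = decode d T k' i" for T k'
      proof -
        have "encode d T (decode d ?N (encode d ?N (glue n d S k c))) = encode d T (decode d T k')"
          using that decode_encode_glue by (intro encode_cong) auto
        then show ?thesis using enc_dec that by simp
      qed
      have "encode d S (decode d ?N (encode d ?N (glue n d S k c))) = k"
        by (rule component) (use S kc in \<open>auto simp: glue_def\<close>)
      moreover have "encode d ?C (decode d ?N (encode d ?N (glue n d S k c))) = c"
        by (rule component) (use kc in \<open>auto simp: glue_def\<close>)
      ultimately show "g (encode d ?N (glue n d S k c)) = (k, c)"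
        unfolding g_def by simp
    qed
    show "\<forall>j\<in>{..<dimS d ?N}. (\<lambda>(k,c). encode d ?N (glue n d S k c)) (g j) = j"
    proof
      fix j assume j: "j \<in> {..<dimS d ?N}"
      have x: "decode d ?N j \<in> assignments n d" using decode_in_assignments pos .
      have "encode d ?N (glue n d S (encode d S (decode d ?N j)) (encode d ?C (decode d ?N j)))
            = encode d ?N (mix S (decode d ?N j) (decode d ?N j))"
        using glue_encode[OF x x] by (intro encode_cong) auto
      also have "\<dots> = j" using enc_dec j by (simp add: mix_def)
      finally show "(\<lambda>(k,c). encode d ?N (glue n d S k c)) (g j) = j" unfolding g_def by simp
    qed
    show "(\<lambda>(k,c). encode d ?N (glue n d S k c)) ` ({..<dimS d S} \<times> {..<dimS d ?C}) \<subseteq> {..<dimS d ?N}"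
      using encode_less_dimS_assignments[OF glue_in_assignments] by auto
    show "g ` {..<dimS d ?N} \<subseteq> {..<dimS d S} \<times> {..<dimS d ?C}"
      unfolding g_def using encode_less_dimS_assignments[OF decode_in_assignments[OF pos]] S by auto
  qed
qed

lemma coeff_matrix_norm:
  assumes "is_pure_state n d \<psi>"
  shows "(\<Sum>k<dimS d S. \<Sum>c<dimS d ({0..<n} - S). coeff_matrix n d \<psi> S k c * cnj (coeff_matrix n d \<psi> S k c)) = 1"
proof -
  let ?g = "\<lambda>j. \<psi> $ j * cnj (\<psi> $ j)"
  have "(\<Sum>k<dimS d S. \<Sum>c<dimS d ({0..<n} - S). coeff_matrix n d \<psi> S k c * cnj (coeff_matrix n d \<psi> S k c))
      = (\<Sum>a\<in>{..<dimS d S} \<times> {..<dimS d ({0..<n} - S)}. ?g ((\<lambda>(k,c). encode d {0..<n} (glue n d S k c)) a))"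
    unfolding sum.cartesian_product coeff_matrix_def by (intro sum.cong refl) auto
  also have "\<dots> = (\<Sum>j<dimS d {0..<n}. ?g j)"
    by (rule sum.reindex_bij_betw[OF glue_bij])
  also have "\<dots> = complex_of_real (\<Sum>j<dim_vec \<psi>. (cmod (\<psi> $ j))\<^sup>2)"
    using assms unfolding is_pure_state_def of_real_sum complex_norm_square by metis
  also have "\<dots> = 1" using assms unfolding is_pure_state_def by (metis of_real_1)
  finally show ?thesis .
qed

lemma reduced_state_is_density:
  "is_pure_state n d \<psi> \<Longrightarrow> is_density (dimS d S) (reduced_state n d \<psi> S)"
  unfolding reduced_state_eq_gram by (rule gram_is_density[OF coeff_matrix_norm])

lemma splits_if_reduced_state_pure:
  assumes "is_pure_density (dimS d S) (reduced_state n d \<psi> S)" "x0 \<in> assignments n d"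
  shows "splits (amplitude n d \<psi>) (assignments n d) S x0"
  unfolding splits_def
proof
  fix x assume x: "x \<in> assignments n d"
  let ?C = "{0..<n} - S" and ?M = "coeff_matrix n d \<psi> S"
  obtain v where "gram (dimS d S) (dimS d ?C) ?M = mat (dimS d S) (dimS d S) (\<lambda>(i,j). v $ i * cnj (v $ j))"
    using assms(1) unfolding is_pure_density_def reduced_state_eq_gram by auto
  then have "?M (encode d S x) (encode d ?C x) * ?M (encode d S x0) (encode d ?C x0)
      = ?M (encode d S x) (encode d ?C x0) * ?M (encode d S x0) (encode d ?C x)"
    using x assms(2) S by (intro gram_rank_one_minors) (auto intro: encode_less_dimS_assignments)
  moreover have "mix S z z = z" for z unfolding mix_def by auto
  ultimately show "amplitude n d \<psi> x * amplitude n d \<psi> x0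
      = amplitude n d \<psi> (mix S x x0) * amplitude n d \<psi> (mix S x0 x)"
    using coeff_matrix_encode x assms(2) by metis
qed

lemma reduced_state_pure_if_fully_separable:
  assumes "is_pure_state n d \<psi>" "fully_separable n d \<psi>"
  shows "is_pure_density (dimS d S) (reduced_state n d \<psi> S)"
proof -
  obtain \<phi> where \<phi>: "\<forall>k<dimS d {0..<n}. \<psi> $ k = (\<Prod>i<n. \<phi> i $ decode d {0..<n} k i)"
    using assms(2) unfolding fully_separable_def by auto
  have "coeff_matrix n d \<psi> S k c = (\<Prod>i\<in>{..<n} \<inter> {i. i \<in> S}. \<phi> i $ decode d S k i)
                         * (\<Prod>i\<in>{..<n} \<inter> - {i. i \<in> S}. \<phi> i $ decode d ({0..<n} - S) c i)" for k c
  proof -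
    have "coeff_matrix n d \<psi> S k c = (\<Prod>i<n. \<phi> i $ glue n d S k c i)"
      unfolding coeff_matrix_def
      using \<phi> encode_less_dimS_assignments[OF glue_in_assignments] decode_encode_glue by simp
    also have "\<dots> = (\<Prod>i<n. if i \<in> S then \<phi> i $ decode d S k i else \<phi> i $ decode d ({0..<n} - S) c i)"
      unfolding glue_def by (intro prod.cong refl) auto
    finally show ?thesis by (simp add: prod.If_cases)
  qed
  then show ?thesis
    unfolding reduced_state_eq_gram
    by (intro gram_pure_if_product) (use reduced_state_is_density[OF assms(1)] in \<open>simp_all add: reduced_state_eq_gram\<close>)
qed

end

section \<open>Full separability\<close>

lemma pure_state_nonzero_entry:
  assumes "is_pure_state n d \<psi>"
  obtains k where "k < dimS d {0..<n}" "\<psi> $ k \<noteq> 0"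
proof -
  have "\<exists>k<dim_vec \<psi>. \<psi> $ k \<noteq> 0"
  proof (rule ccontr)
    assume "\<not> (\<exists>k<dim_vec \<psi>. \<psi> $ k \<noteq> 0)"
    then have "(\<Sum>k<dim_vec \<psi>. (cmod (\<psi> $ k))\<^sup>2) = 0" by simp
    then show False using assms unfolding is_pure_state_def by auto
  qed
  then show ?thesis using assms that unfolding is_pure_state_def by auto
qed

lemma pure_state_dims_pos:
  assumes "is_pure_state n d \<psi>"
  shows "\<forall>i<n. 0 < d i"
proof -
  obtain k where "k < dimS d {0..<n}" using pure_state_nonzero_entry[OF assms] .
  then show ?thesis unfolding dimS_def by (metis atLeastLessThan_iff finite_atLeastLessThan
        gr_zeroI less_nat_zero_code prod_zero zero_le)
qed

lemma pure_state_nonzero_amplitude: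
  assumes "is_pure_state n d \<psi>"
  obtains x0 where "x0 \<in> assignments n d" "amplitude n d \<psi> x0 \<noteq> 0"
proof -
  have pos: "\<forall>i<n. 0 < d i" using pure_state_dims_pos[OF assms] .
  obtain k where k: "k < dimS d {0..<n}" "\<psi> $ k \<noteq> 0" using pure_state_nonzero_entry[OF assms] .
  have "encode d {0..<n} (decode d {0..<n} k) = k"
    using pos k by (intro encode_decode) auto
  then show ?thesis
    using that[of "decode d {0..<n} k"] decode_in_assignments[OF pos] k by (simp add: amplitude_def)
qed

text \<open>The factors are the amplitudes along the coordinate lines through the base point x0,
  with the normalisation \<open>P x0\<^sup>1\<^sup>-\<^sup>n\<close> absorbed into the first one.\<close>
lemma fully_separable_if_splits_singletons:
  assumes pos: "\<forall>i<n. 0 < d i" and n: "0 < n"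
    and x0: "x0 \<in> assignments n d" "amplitude n d \<psi> x0 \<noteq> 0"
    and singles: "\<And>i. i < n \<Longrightarrow> splits (amplitude n d \<psi>) (assignments n d) {i} x0"
  shows "fully_separable n d \<psi>"
proof -
  let ?P = "amplitude n d \<psi>"
  define c where "c = inverse (?P x0 ^ (n - 1))"
  define \<phi> where "\<phi> i = vec (d i) (\<lambda>a. (if i = 0 then c else 1) * ?P (x0(i := a)))" for i
  show ?thesis unfolding fully_separable_def
  proof (intro exI conjI allI impI)
    fix i assume "i < n" then show "dim_vec (\<phi> i) = d i" unfolding \<phi>_def by simp
  next
    fix k assume k: "k < dimS d {0..<n}"
    define x where "x = decode d {0..<n} k"
    have x_in: "x \<in> assignments n d" unfolding x_def using decode_in_assignments[OF pos] .
    have "?P x * ?P x0 ^ n = ?P x0 * (\<Prod>i<n. ?P (x0(i := x i)))"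
      using splits_singletons_product[OF x0 mix_in_assignments amplitude_cong singles x_in] .
    moreover have "?P x0 ^ n = ?P x0 * ?P x0 ^ (n - 1)" using n by (cases n) simp_all
    ultimately have "(\<Prod>i<n. ?P (x0(i := x i))) = ?P x * ?P x0 ^ (n - 1)"
      using x0(2) by (simp add: mult_ac)
    then have "(\<Prod>i<n. \<phi> i $ x i) = ?P x"
      using x_in n x0(2) unfolding \<phi>_def c_def assignments_def
      by (simp add: prod.distrib prod.delta)
    moreover have "\<psi> $ k = ?P x"
      unfolding amplitude_def x_def using pos k by (subst encode_decode) auto
    ultimately show "\<psi> $ k = (\<Prod>i<n. \<phi> i $ decode d {0..<n} k i)" unfolding x_def by simp
  qed
qed

theorem fully_separable_iff_reduced_states_pure:
  assumes n: "4 \<le> n" and \<psi>: "is_pure_state n d \<psi>"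
  shows "fully_separable n d \<psi> \<longleftrightarrow>
    (\<forall>S\<in>T_family n - (\<lambda>i. {i}) ` {..<n}. is_pure_density (dimS d S) (reduced_state n d \<psi> S))"
proof
  assume "fully_separable n d \<psi>"
  then show "\<forall>S\<in>T_family n - (\<lambda>i. {i}) ` {..<n}. is_pure_density (dimS d S) (reduced_state n d \<psi> S)"
    using reduced_state_pure_if_fully_separable[OF pure_state_dims_pos[OF \<psi>] _ \<psi>]
    by (auto simp: T_family_def)
next
  assume pure: "\<forall>S\<in>T_family n - (\<lambda>i. {i}) ` {..<n}. is_pure_density (dimS d S) (reduced_state n d \<psi> S)"
  have pos: "\<forall>i<n. 0 < d i" using pure_state_dims_pos[OF \<psi>] .
  obtain x0 where x0: "x0 \<in> assignments n d" "amplitude n d \<psi> x0 \<noteq> 0"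
    using pure_state_nonzero_amplitude[OF \<psi>] .
  have pairs: "splits (amplitude n d \<psi>) (assignments n d) S x0" if "S \<in> T_family n" "card S = 2" for S
  proof (rule splits_if_reduced_state_pure[OF pos _ _ x0(1)])
    show "S \<subseteq> {0..<n}" using that by (simp add: T_family_def)
    show "is_pure_density (dimS d S) (reduced_state n d \<psi> S)" using pure that by auto
  qed
  have "splits (amplitude n d \<psi>) (assignments n d) {i} x0" if "i < n" for i
    by (rule splits_singletons_if_pairs[where n=n, OF x0 mix_in_assignments amplitude_cong n pairs that])
  then show "fully_separable n d \<psi>"
    using fully_separable_if_splits_singletons[OF pos _ x0] n by simp
qed

lemma E_family_eq_E_single_plus:
  assumes "3 \<le> n"
  shows "E_family h n d \<psi> = E_single h n d \<psi>
           + (\<Sum>S\<in>T_family n - (\<lambda>i. {i}) ` {..<n}. h (reduced_state n d \<psi> S)) / 2"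
proof -
  have fin: "finite (T_family n)"
    by (rule finite_subset[of _ "Pow {0..<n}"]) (auto simp: T_family_def)
  have sub: "(\<lambda>i. {i}) ` {..<n} \<subseteq> T_family n" using assms by (auto simp: T_family_def)
  have "(\<Sum>S\<in>(\<lambda>i. {i}) ` {..<n}. h (reduced_state n d \<psi> S)) = (\<Sum>i<n. h (reduced_state n d \<psi> {i}))"
    by (subst sum.reindex) (auto simp: inj_on_def)
  then show ?thesis
    unfolding E_family_def E_single_def sum.subset_diff[OF sub fin] by simp
qed

theorem mainTheorem4:
  fixes h :: "complex mat \<Rightarrow> real" and n :: nat and d :: "nat \<Rightarrow> nat" and \<psi> :: "complex vec"
  assumes "reduced_function h" and "n \<ge> 4" and "is_pure_state n d \<psi>"
  shows "E_single h n d \<psi> \<le> E_family h n d \<psi>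
    \<and> (E_single h n d \<psi> < E_family h n d \<psi> \<longleftrightarrow> \<not> fully_separable n d \<psi>)"
proof -
  let ?U = "T_family n - (\<lambda>i. {i}) ` {..<n}"
  let ?h = "\<lambda>S. h (reduced_state n d \<psi> S)"
  have density: "is_density (dimS d S) (reduced_state n d \<psi> S)" if "S \<in> ?U" for S
    using that reduced_state_is_density[OF pure_state_dims_pos[OF assms(3)] _ assms(3)]
    by (auto simp: T_family_def)
  then have nonneg: "0 \<le> ?h S" and zero_iff_pure: "?h S = 0 \<longleftrightarrow> is_pure_density (dimS d S) (reduced_state n d \<psi> S)"
    if "S \<in> ?U" for S
    using assms(1) that unfolding reduced_function_def by blast+
  have fin: "finite ?U" by (rule finite_subset[of _ "Pow {0..<n}"]) (auto simp: T_family_def)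
  have "sum ?h ?U = 0 \<longleftrightarrow> fully_separable n d \<psi>"
    using sum_nonneg_eq_0_iff[OF fin nonneg] zero_iff_pure
      fully_separable_iff_reduced_states_pure[OF assms(2,3)] by auto
  moreover have "0 \<le> sum ?h ?U" using nonneg by (rule sum_nonneg)
  ultimately show ?thesis using E_family_eq_E_single_plus[of n h d \<psi>] assms(2) by auto
qed

end
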